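(* Let $X$ be a real Banach space with $\dim X \ge 2$. Then $0 \le S_P(X) \le \tfrac12$.
   Context: For a real Banach space $X$ with unit sphere $S_X=\{x:\|x\|=1\}$, the P-angle between nonzero vectors $u,v$ is $\operatorname{ang}_P(u,v)=\arccos\frac{\|u\|^2+\|v\|^2-\|u-v\|^2}{2\|u\|\|v\|}$. The P-angle constant is $S_P(X)=\sup\{\cos\operatorname{ang}_P(x+y,x-y): x,y\in S_X,\ x\neq \pm y\}$; explicitly, $\cos\operatorname{ang}_P(x+y,x-y)=\frac{\|x+y\|^2+\|x-y\|^2-4}{2\|x+y\|\,\|x-y\|}$ for $x,y\in S_X$, $x\ne\pm y$. *)

theory Defs
  imports "HOL-Analysis.Analysis"
begin

definition ang_P :: "'a::real_normed_vector \<Rightarrow> 'a \<Rightarrow> real" where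
  "ang_P u v = arccos ((norm u ^ 2 + norm v ^ 2 - norm (u - v) ^ 2) / (2 * norm u * norm v))"

definition S_P :: "'a::real_normed_vector itself \<Rightarrow> real" where
  "S_P TYPE('a) = Sup {cos (ang_P (x + y) (x - y)) | x y :: 'a.
       norm x = 1 \<and> norm y = 1 \<and> x \<noteq> y \<and> x \<noteq> - y}"

end

theory Submission
  imports Defs
begin

text \<open>
  For unit vectors x, y put a = \<parallel>x + y\<parallel> and b = \<parallel>x - y\<parallel>; the triangle inequality gives
  a, b \<le> 2 \<le> a + b, and these constraints alone force (a^2 + b^2 - 4) / (2ab) \<le> 1/2.
  For the lower bound, the intermediate value theorem along a half circle in the plane
  of two independent vectors yields unit x, y with \<parallel>x + y\<parallel> = \<parallel>x - y\<parallel> = c, where the cosine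
  is 1 - 2/c^2. Replacing (x, y) by ((x + y)/c, (x - y)/c) turns c into 2/c, and one of
  c, 2/c has square at least 2.
\<close>

lemma P_ratio_bounds:
  fixes a b :: real
  assumes "0 < a" "0 < b" "a \<le> 2" "b \<le> 2" "2 \<le> a + b"
  shows "-1 \<le> (a\<^sup>2 + b\<^sup>2 - 4) / (2 * a * b)" and "(a\<^sup>2 + b\<^sup>2 - 4) / (2 * a * b) \<le> 1 / 2"
proof -
  have "2\<^sup>2 \<le> (a + b)\<^sup>2" using assms by (intro power_mono) auto
  then have "- (2 * a * b) \<le> a\<^sup>2 + b\<^sup>2 - 4" by (simp add: power2_eq_square algebra_simps)
  then show "-1 \<le> (a\<^sup>2 + b\<^sup>2 - 4) / (2 * a * b)" using assms by (simp add: field_simps)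
  have "0 \<le> (2 - a) * (2 - b)" "a\<^sup>2 \<le> 2 * a" "b\<^sup>2 \<le> 2 * b"
    using assms by (simp_all add: power2_eq_square)
  then have "a\<^sup>2 + b\<^sup>2 - 4 \<le> a * b" by (simp add: algebra_simps)
  then show "(a\<^sup>2 + b\<^sup>2 - 4) / (2 * a * b) \<le> 1 / 2" using assms by (simp add: field_simps)
qed

lemma norm_sum_diff_unit_bounds:
  fixes x y :: "'a::real_normed_vector"
  assumes "norm x = 1" "norm y = 1"
  shows "norm (x + y) \<le> 2" "norm (x - y) \<le> 2" "2 \<le> norm (x + y) + norm (x - y)"
proof -
  show "norm (x + y) \<le> 2" using norm_triangle_ineq[of x y] assms by simp
  show "norm (x - y) \<le> 2" using norm_triangle_ineq4[of x y] assms by simp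
  have "(x + y) + (x - y) = 2 *\<^sub>R x" by (simp add: scaleR_2)
  then show "2 \<le> norm (x + y) + norm (x - y)"
    using norm_triangle_ineq[of "x + y" "x - y"] assms by simp
qed

lemma cos_ang_P_sum_diff:
  fixes x y :: "'a::real_normed_vector"
  assumes "norm x = 1" "norm y = 1" "x \<noteq> y" "x \<noteq> - y"
  shows "cos (ang_P (x + y) (x - y))
           = ((norm (x + y))\<^sup>2 + (norm (x - y))\<^sup>2 - 4) / (2 * norm (x + y) * norm (x - y))"
proof -
  have "(x + y) - (x - y) = 2 *\<^sub>R y" by (simp add: scaleR_2)
  then have diff: "(norm ((x + y) - (x - y)))\<^sup>2 = 4" using assms by simp
  have "0 < norm (x + y)" "0 < norm (x - y)"
    using assms by (auto simp: add_eq_0_iff)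
  note bounds = P_ratio_bounds[OF this norm_sum_diff_unit_bounds[OF assms(1,2)]]
  have "-1 \<le> ((norm (x + y))\<^sup>2 + (norm (x - y))\<^sup>2 - 4) / (2 * norm (x + y) * norm (x - y))"
    "((norm (x + y))\<^sup>2 + (norm (x - y))\<^sup>2 - 4) / (2 * norm (x + y) * norm (x - y)) \<le> 1"
    using bounds by linarith+
  then show ?thesis unfolding ang_P_def diff by (rule cos_arccos)
qed

lemma cos_ang_P_sum_diff_le_half:
  fixes x y :: "'a::real_normed_vector"
  assumes "norm x = 1" "norm y = 1" "x \<noteq> y" "x \<noteq> - y"
  shows "cos (ang_P (x + y) (x - y)) \<le> 1 / 2"
proof -
  have "0 < norm (x + y)" "0 < norm (x - y)"
    using assms by (auto simp: add_eq_0_iff)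
  then show ?thesis
    unfolding cos_ang_P_sum_diff[OF assms]
    using P_ratio_bounds(2)[OF _ _ norm_sum_diff_unit_bounds[OF assms(1,2)]] by blast
qed

lemma cos_ang_P_isosceles:
  fixes x y :: "'a::real_normed_vector"
  assumes "norm x = 1" "norm y = 1" "norm (x + y) = c" "norm (x - y) = c" "0 < c"
  shows "x \<noteq> y" "x \<noteq> - y" "cos (ang_P (x + y) (x - y)) = 1 - 2 / c\<^sup>2"
proof -
  show xy: "x \<noteq> y" "x \<noteq> - y"
    using assms(3-5) by (auto simp flip: diff_minus_eq_add)
  show "cos (ang_P (x + y) (x - y)) = 1 - 2 / c\<^sup>2"
    unfolding cos_ang_P_sum_diff[OF assms(1,2) xy] using assms
    by (simp add: field_simps power2_eq_square)
qed

lemma isosceles_unit_pair_swap: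
  fixes x y :: "'a::real_normed_vector"
  assumes "norm x = 1" "norm y = 1" "norm (x + y) = c" "norm (x - y) = c" "0 < c"
  defines "x' \<equiv> (x + y) /\<^sub>R c" and "y' \<equiv> (x - y) /\<^sub>R c"
  shows "norm x' = 1" "norm y' = 1" "norm (x' + y') = 2 / c" "norm (x' - y') = 2 / c"
proof -
  show "norm x' = 1" "norm y' = 1" using assms by auto
  have "x' + y' = ((x + y) + (x - y)) /\<^sub>R c" "x' - y' = ((x + y) - (x - y)) /\<^sub>R c"
    unfolding x'_def y'_def by (simp_all only: scaleR_right_distrib scaleR_right_diff_distrib)
  moreover have "(x + y) + (x - y) = 2 *\<^sub>R x" "(x + y) - (x - y) = 2 *\<^sub>R y"
    by (simp_all add: scaleR_2)
  ultimately show "norm (x' + y') = 2 / c" "norm (x' - y') = 2 / c"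
    using assms(1,2,5) by (simp_all add: divide_inverse_commute)
qed

lemma exists_unit_pair_norm_sum_eq_norm_diff:
  fixes u v :: "'a::real_normed_vector"
  assumes "u \<noteq> v" "independent {u, v}"
  obtains x y :: 'a where "norm x = 1" "norm y = 1" "norm (x + y) = norm (x - y)"
proof -
  have nonzero: "u \<noteq> 0" "v \<noteq> 0" using assms(2) dependent_zero[of "{u, v}"] by blast+
  have u_notin: "u \<notin> span {v}" using assms independent_insert[of u "{v}"] by auto
  define w where "w t = cos (pi * t) *\<^sub>R v + sin (pi * t) *\<^sub>R u" for t
  have w_nonzero: "w t \<noteq> 0" for t
  proof
    assume w0: "w t = 0"
    show False
    proof (cases "sin (pi * t) = 0")
      case True
      then have "cos (pi * t) \<noteq> 0" using sin_cos_squared_add[of "pi * t"] by auto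
      with w0 True nonzero show False by (simp add: w_def)
    next
      case False
      from w0 have "sin (pi * t) *\<^sub>R u = - (cos (pi * t) *\<^sub>R v)"
        unfolding w_def by (simp add: eq_neg_iff_add_eq_0 add.commute)
      then have "u = (- cos (pi * t) / sin (pi * t)) *\<^sub>R v"
        using False by (metis (no_types, lifting) divide_inverse_commute mult.commute
            scaleR_minus_left scaleR_scaleR right_inverse scaleR_one)
      then have "u \<in> span {v}" by (metis span_base span_scale insertI1)
      with u_notin show False by simp
    qed
  qed
  define x where "x = u /\<^sub>R norm u"
  define y where "y t = w t /\<^sub>R norm (w t)" for t
  define h where "h t = norm (x + y t) - norm (x - y t)" for t
  have "continuous_on {0..1} w" unfolding w_def by (intro continuous_intros)
  then have "continuous_on {0..1} y" unfolding y_def using w_nonzero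
    by (intro continuous_intros) auto
  then have h_cont: "continuous_on {0..1} h" unfolding h_def by (intro continuous_intros)
  have "y 1 = - y 0" by (simp add: y_def w_def)
  then have h_antipodal: "h 1 = - h 0" unfolding h_def by (simp add: norm_minus_commute)
  have "\<exists>t\<in>{0..1}. h t = 0"
  proof (cases "h 0 \<le> 0")
    case True
    then show ?thesis using IVT'[of h 0 0 1] h_cont h_antipodal by auto
  next
    case False
    then show ?thesis using IVT2'[of h 1 0 0] h_cont h_antipodal by auto
  qed
  then obtain t where "norm (x + y t) = norm (x - y t)" unfolding h_def by auto
  moreover have "norm x = 1" "norm (y t) = 1" using nonzero w_nonzero by (auto simp: x_def y_def)
  ultimately show ?thesis using that by blast
qed

lemma exists_nonneg_cos_ang_P:
  fixes u v :: "'a::real_normed_vector"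
  assumes "u \<noteq> v" "independent {u, v}"
  obtains x y :: 'a where "norm x = 1" "norm y = 1" "x \<noteq> y" "x \<noteq> - y"
    "0 \<le> cos (ang_P (x + y) (x - y))"
proof -
  note witness = that
  have good: thesis if "norm x = 1" "norm y = 1" "norm (x + y) = c" "norm (x - y) = c"
    "0 < c" "2 \<le> c\<^sup>2" for x y :: 'a and c
  proof -
    have "0 \<le> 1 - 2 / c\<^sup>2" using \<open>2 \<le> c\<^sup>2\<close> by (simp add: divide_le_eq)
    then show thesis using witness[OF that(1,2)] cos_ang_P_isosceles[OF that(1-5)] by simp
  qed
  obtain x y :: 'a where xy: "norm x = 1" "norm y = 1" "norm (x + y) = norm (x - y)"
    using exists_unit_pair_norm_sum_eq_norm_diff[OF assms] .
  define c where "c = norm (x + y)"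
  have c_eq: "norm (x + y) = c" "norm (x - y) = c" using xy by (simp_all add: c_def)
  have "0 < c" using norm_sum_diff_unit_bounds(3)[OF xy(1,2)] c_eq by simp
  show thesis
  proof (cases "2 \<le> c\<^sup>2")
    case True
    then show thesis using good[OF xy(1,2) c_eq \<open>0 < c\<close>] by blast
  next
    case False
    have "2 \<le> (2 / c)\<^sup>2" using False \<open>0 < c\<close> by (simp add: field_simps power2_eq_square)
    then show thesis
      using good[OF isosceles_unit_pair_swap[OF xy(1,2) c_eq \<open>0 < c\<close>]] \<open>0 < c\<close> by simp
  qed
qed

theorem proposition3p3:
  assumes "\<exists>u v :: 'a::banach. u \<noteq> v \<and> independent {u, v}"
  shows "0 \<le> S_P TYPE('a) \<and> S_P TYPE('a) \<le> 1 / 2"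
proof -
  define S where "S = {cos (ang_P (x + y) (x - y)) | x y :: 'a.
       norm x = 1 \<and> norm y = 1 \<and> x \<noteq> y \<and> x \<noteq> - y}"
  have upper: "\<And>s. s \<in> S \<Longrightarrow> s \<le> 1 / 2"
    unfolding S_def using cos_ang_P_sum_diff_le_half by blast
  obtain x y :: 'a where "norm x = 1" "norm y = 1" "x \<noteq> y" "x \<noteq> - y"
    and nonneg: "0 \<le> cos (ang_P (x + y) (x - y))"
    using assms exists_nonneg_cos_ang_P by metis
  then have mem: "cos (ang_P (x + y) (x - y)) \<in> S" unfolding S_def by blast
  have "bdd_above S" using upper by (intro bdd_aboveI) blast
  then have "0 \<le> Sup S" using cSup_upper[OF mem] nonneg by linarith
  moreover have "Sup S \<le> 1 / 2" using mem upper by (intro cSup_least) auto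
  ultimately show ?thesis unfolding S_P_def S_def by simp
qed

end
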